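(* Let $W$ be an outcome satisfying UPRF. Then $W$ satisfies $\frac{3+\sqrt{17}}{2}$-proportional fairness, satisfies $3$-individual fairness (when $N\subseteq C$), and is in the $\left(\gamma,\frac{3\gamma}{\gamma-1}\right)$-transferable core for every $\gamma>1$.
   Context: Let $(\mathcal X,d)$ be a metric space, $N=[n]$ a set of agents and $C$ a set of candidates located in $\mathcal X$, $k\in\mathbb N^+$; an outcome is $W\subseteq C$ with $|W|\le k$; $B(i,r)=\{x\in\mathcal X:d(i,x)\le r\}$; $d(i,W)=\min_{c\in W}d(i,c)$. UPRF: there are no $\ell\in\mathbb N$, no $N'\subseteq N$ with $|N'|\ge\ell n/k$, and no $y\in\mathbb R$ with $\max_{i,i'\in N'}d(i,i')\le y$ and $|\bigcup_{i\in N'}B(i,y)\cap W|<\ell$. $\alpha$-proportional fairness: there is no $N'\subseteq N$ with $|N'|\ge n/k$ and $c\in C\setminus W$ with $\alpha\,d(i,c)<d(i,W)$ for all $i\in N'$. $\beta$-individual fairness (defined only for instances with $N\subseteq C$): $d(i,W)\le\beta\,r(i)$ for all $i\in N$, where $r(i)=\min\{r: |B(i,r)\cap N|\ge n/k\}$. $(\gamma,\alpha)$-transferable core: there is no $N'\subseteq N$ and $c\in C\setminus W$ with $|N'|\ge\gamma n/k$ and $\alpha\sum_{i\in N'}d(i,c)<\sum_{i\in N'}d(i,W)$. *)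

theory Defs
  imports "HOL-Analysis.Analysis"
begin

text \<open>Candidates C :: 'a set, outcome W \<subseteq> C.
  d(i,W) = min over W of the distance, rendered by the library's infdist
  (which equals the minimum for finite nonempty W).\<close>

definition agents :: "nat \<Rightarrow> nat set" where
  "agents n = {..<n}"

definition UPRF :: "nat \<Rightarrow> nat \<Rightarrow> (nat \<Rightarrow> 'a::metric_space) \<Rightarrow> 'a set \<Rightarrow> bool" where
  "UPRF n k loc W \<longleftrightarrow>
     \<not> (\<exists>(l::nat) N' (y::real). N' \<subseteq> agents n \<and>
          real (card N') \<ge> real l * real n / real k \<and>
          (\<forall>i\<in>N'. \<forall>i'\<in>N'. dist (loc i) (loc i') \<le> y) \<and>
          card ((\<Union>i\<in>N'. cball (loc i) y) \<inter> W) < l)"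

definition prop_fair :: "nat \<Rightarrow> nat \<Rightarrow> (nat \<Rightarrow> 'a::metric_space) \<Rightarrow> 'a set \<Rightarrow> real \<Rightarrow> 'a set \<Rightarrow> bool" where
  "prop_fair n k loc C \<alpha> W \<longleftrightarrow>
     \<not> (\<exists>N' c. N' \<subseteq> agents n \<and> c \<in> C - W \<and>
          real (card N') \<ge> real n / real k \<and>
          (\<forall>i\<in>N'. \<alpha> * dist (loc i) c < infdist (loc i) W))"

definition ind_radius :: "nat \<Rightarrow> nat \<Rightarrow> (nat \<Rightarrow> 'a::metric_space) \<Rightarrow> nat \<Rightarrow> real" where
  "ind_radius n k loc i =
     Inf {r::real. real (card {j \<in> agents n. dist (loc i) (loc j) \<le> r}) \<ge> real n / real k}"

definition ind_fair :: "nat \<Rightarrow> nat \<Rightarrow> (nat \<Rightarrow> 'a::metric_space) \<Rightarrow> real \<Rightarrow> 'a set \<Rightarrow> bool" where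
  "ind_fair n k loc \<beta> W \<longleftrightarrow>
     (\<forall>i\<in>agents n. infdist (loc i) W \<le> \<beta> * ind_radius n k loc i)"

definition transferable_core :: "nat \<Rightarrow> nat \<Rightarrow> (nat \<Rightarrow> 'a::metric_space) \<Rightarrow> 'a set \<Rightarrow> real \<Rightarrow> real \<Rightarrow> 'a set \<Rightarrow> bool" where
  "transferable_core n k loc C \<gamma> \<alpha> W \<longleftrightarrow>
     \<not> (\<exists>N' c. N' \<subseteq> agents n \<and> c \<in> C - W \<and>
          real (card N') \<ge> \<gamma> * real n / real k \<and>
          \<alpha> * (\<Sum>i\<in>N'. dist (loc i) c) < (\<Sum>i\<in>N'. infdist (loc i) W))"

end

theory Submission
  imports Defs
begin

(* Only the case \<ell> = 1 of UPRF is used: a group of at least n/k agents inside a ball of radius r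
   has a member within 2r of W. Proportional and individual fairness
   follow by applying this to a deviating coalition around c, resp. to the agents within r(i) of i.
   For the transferable core let d_i = d(i,c), e_i = d(i,W) and \<rho> = d(c,W). At every scale t at most
   n/k coalition members have d_i \<le> t < e_i/2. Integrating this over t \<in> [0, \<rho>/2] gives
   \<Sum>(e_i - 3 d_i) \<le> (n/k) \<rho>; at t = \<rho>/3 it leaves at most n/k members with d_i < \<rho>/3, so
   3 \<Sum> d_i \<ge> (|N'| - n/k) \<rho>. Combining both with |N'| \<ge> \<gamma> n/k gives the factor 3\<gamma>/(\<gamma> - 1). *)

lemma finite_agents [simp]: "finite (agents n)"
  by (simp add: agents_def)

lemma sum_measure_le_overlap:
  fixes M :: "'a measure" and A :: "'i \<Rightarrow> 'a set"
  assumes I: "finite I" and A: "\<And>i. i \<in> I \<Longrightarrow> A i \<in> sets M"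
    and AS: "\<And>i. i \<in> I \<Longrightarrow> A i \<subseteq> S" and S: "S \<in> sets M" "emeasure M S < \<infinity>"
    and overlap: "\<And>x. x \<in> S \<Longrightarrow> real (card {i\<in>I. x \<in> A i}) \<le> s"
  shows "(\<Sum>i\<in>I. measure M (A i)) \<le> s * measure M S"
proof -
  have int_A: "integrable M (indicator (A i) :: 'a \<Rightarrow> real)" if "i \<in> I" for i
    using A[OF that] S emeasure_mono[OF AS[OF that] S(1)]
    by (intro integrable_real_indicator) auto
  have count: "(\<Sum>i\<in>I. indicator (A i) x) = real (card {i\<in>I. x \<in> A i})" for x
    using I by (simp add: indicator_def sum.If_cases Int_def)
  have pointwise: "(\<Sum>i\<in>I. indicator (A i) x) \<le> s * indicator S x" for x
  proof (cases "x \<in> S")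
    case False
    then have "indicator (A i) x = (0::real)" if "i \<in> I" for i
      using AS[OF that] by (auto simp: indicator_def)
    with False show ?thesis by simp
  qed (use overlap count in auto)
  have "(\<Sum>i\<in>I. measure M (A i)) = (\<integral>x. (\<Sum>i\<in>I. indicator (A i) x) \<partial>M)"
    using int_A A by (simp add: integral_sum sets.Int_space_eq2)
  also have "\<dots> \<le> (\<integral>x. s * indicator S x \<partial>M)"
    using int_A S pointwise by (intro integral_mono) (auto intro: integrable_real_indicator)
  also have "\<dots> = s * measure M S"
    using S by (simp add: sets.Int_space_eq2)
  finally show ?thesis .
qed

lemma sum_excess_le_of_layer_bound:
  fixes d e :: "'i \<Rightarrow> real"
  assumes G: "finite G" and d: "\<And>i. i \<in> G \<Longrightarrow> 0 \<le> d i"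
    and e: "\<And>i. i \<in> G \<Longrightarrow> e i \<le> d i + \<rho>" and "0 \<le> \<rho>"
    and layers: "\<And>t. real (card {i\<in>G. d i \<le> t \<and> 2 * t < e i}) \<le> s"
  shows "(\<Sum>i\<in>G. e i - 3 * d i) \<le> s * \<rho>"
proof -
  define u where "u i = max (d i) (min (e i / 2) (\<rho> / 2))" for i
  \<comment> \<open>agent i is counted in every layer t \<in> [d i, u i) \<subseteq> [0, \<rho>/2], and e i - 3 d i \<le> 2 (u i - d i)\<close>
  have measure_A: "measure lborel {d i..<u i} = u i - d i" for i
    by (simp add: u_def)
  have "(\<Sum>i\<in>G. measure lborel {d i..<u i}) \<le> s * measure lborel {0..\<rho>/2}"
  proof (rule sum_measure_le_overlap[OF G])
    show "{d i..<u i} \<subseteq> {0..\<rho>/2}" if "i \<in> G" for i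
      using d[OF that] by (auto simp: u_def)
    show "real (card {i\<in>G. t \<in> {d i..<u i}}) \<le> s" for t
    proof -
      have "{i\<in>G. t \<in> {d i..<u i}} \<subseteq> {i\<in>G. d i \<le> t \<and> 2 * t < e i}"
        by (auto simp: u_def)
      then have "card {i\<in>G. t \<in> {d i..<u i}} \<le> card {i\<in>G. d i \<le> t \<and> 2 * t < e i}"
        using G by (intro card_mono) auto
      then show ?thesis using layers[of t] by linarith
    qed
  qed (auto simp: emeasure_lborel_Icc_eq)
  then have "(\<Sum>i\<in>G. u i - d i) \<le> s * (\<rho> / 2)"
    using \<open>0 \<le> \<rho>\<close> by (simp add: measure_A)
  moreover have "e i - 3 * d i \<le> 2 * (u i - d i)" if "i \<in> G" for i
    using d[OF that] e[OF that] by (auto simp: u_def)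
  then have "(\<Sum>i\<in>G. e i - 3 * d i) \<le> 2 * (\<Sum>i\<in>G. u i - d i)"
    by (simp add: sum_distrib_left sum_mono)
  ultimately show ?thesis by linarith
qed

lemma card_minus_mult_le_sum_of_layer_bound:
  fixes d e :: "'i \<Rightarrow> real"
  assumes G: "finite G" and d: "\<And>i. i \<in> G \<Longrightarrow> 0 \<le> d i"
    and e: "\<And>i. i \<in> G \<Longrightarrow> \<rho> \<le> e i + d i" and "0 \<le> \<rho>"
    and layer: "real (card {i\<in>G. d i \<le> \<rho> / 3 \<and> 2 * (\<rho> / 3) < e i}) \<le> s"
  shows "(real (card G) - s) * \<rho> \<le> 3 * (\<Sum>i\<in>G. d i)"
proof -
  define L where "L = {i\<in>G. 3 * d i < \<rho>}"
  have "L \<subseteq> {i\<in>G. d i \<le> \<rho> / 3 \<and> 2 * (\<rho> / 3) < e i}"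
    using e by (force simp: L_def)
  then have "real (card L) \<le> s"
    using G layer card_mono[of "{i\<in>G. d i \<le> \<rho> / 3 \<and> 2 * (\<rho> / 3) < e i}" L] by auto
  have "(\<Sum>i\<in>G. \<rho> - (if i \<in> L then \<rho> else 0)) \<le> (\<Sum>i\<in>G. 3 * d i)"
    using d by (intro sum_mono) (auto simp: L_def)
  moreover have "(\<Sum>i\<in>G. \<rho> - (if i \<in> L then \<rho> else 0)) = (real (card G) - real (card L)) * \<rho>"
    using G by (simp add: sum_subtractf sum.If_cases L_def Int_def algebra_simps)
  ultimately have "(real (card G) - real (card L)) * \<rho> \<le> 3 * (\<Sum>i\<in>G. d i)"
    by (simp add: sum_distrib_left)
  moreover have "(real (card G) - s) * \<rho> \<le> (real (card G) - real (card L)) * \<rho>"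
    using \<open>real (card L) \<le> s\<close> \<open>0 \<le> \<rho>\<close> by (intro mult_right_mono) auto
  ultimately show ?thesis by linarith
qed

lemma sum_le_of_layer_bound:
  fixes d e :: "'i \<Rightarrow> real"
  assumes G: "finite G" and d: "\<And>i. i \<in> G \<Longrightarrow> 0 \<le> d i"
    and e_upper: "\<And>i. i \<in> G \<Longrightarrow> e i \<le> d i + \<rho>"
    and e_lower: "\<And>i. i \<in> G \<Longrightarrow> \<rho> \<le> e i + d i" and \<rho>: "0 \<le> \<rho>"
    and layers: "\<And>t. real (card {i\<in>G. d i \<le> t \<and> 2 * t < e i}) \<le> s"
    and "1 < \<gamma>" and "\<gamma> * s \<le> real (card G)"
  shows "(\<Sum>i\<in>G. e i) \<le> 3 * \<gamma> / (\<gamma> - 1) * (\<Sum>i\<in>G. d i)"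
proof -
  have "(\<Sum>i\<in>G. e i - 3 * d i) \<le> s * \<rho>"
    by (rule sum_excess_le_of_layer_bound[OF G d e_upper \<rho> layers])
  then have excess: "(\<Sum>i\<in>G. e i) \<le> 3 * (\<Sum>i\<in>G. d i) + s * \<rho>"
    by (simp add: sum_subtractf sum_distrib_left)
  have "(\<gamma> - 1) * s * \<rho> \<le> (real (card G) - s) * \<rho>"
    using \<open>\<gamma> * s \<le> real (card G)\<close> \<rho> by (intro mult_right_mono) (auto simp: algebra_simps)
  also have "\<dots> \<le> 3 * (\<Sum>i\<in>G. d i)"
    by (rule card_minus_mult_le_sum_of_layer_bound[OF G d e_lower \<rho> layers])
  finally have far: "(\<gamma> - 1) * s * \<rho> \<le> 3 * (\<Sum>i\<in>G. d i)" .
  have "(\<gamma> - 1) * (\<Sum>i\<in>G. e i) \<le> (\<gamma> - 1) * (3 * (\<Sum>i\<in>G. d i) + s * \<rho>)"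
    using excess \<open>1 < \<gamma>\<close> by simp
  also have "\<dots> \<le> 3 * \<gamma> * (\<Sum>i\<in>G. d i)"
    using far by (simp add: algebra_simps)
  finally show ?thesis
    using \<open>1 < \<gamma>\<close> by (simp add: field_simps)
qed

lemma UPRF_group_near_outcome:
  assumes "UPRF n k loc W" and "G \<subseteq> agents n" and "real n / real k \<le> real (card G)"
    and "\<And>i i'. i \<in> G \<Longrightarrow> i' \<in> G \<Longrightarrow> dist (loc i) (loc i') \<le> y"
  shows "\<exists>i\<in>G. infdist (loc i) W \<le> y"
proof -
  have "\<not> (G \<subseteq> agents n \<and> real (card G) \<ge> real 1 * real n / real k
      \<and> (\<forall>i\<in>G. \<forall>i'\<in>G. dist (loc i) (loc i') \<le> y)
      \<and> card ((\<Union>i\<in>G. cball (loc i) y) \<inter> W) < 1)"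
    using assms(1) unfolding UPRF_def by blast
  then have "\<not> card ((\<Union>i\<in>G. cball (loc i) y) \<inter> W) < 1"
    using assms(2-4) by auto
  then have "(\<Union>i\<in>G. cball (loc i) y) \<inter> W \<noteq> {}"
    by (metis card.empty less_one)
  then obtain i w where "i \<in> G" "w \<in> W" "dist (loc i) w \<le> y"
    by auto
  then show ?thesis
    using infdist_le[of w W "loc i"] by force
qed

lemma UPRF_ball_near_outcome:
  assumes "UPRF n k loc W" and "G \<subseteq> agents n" and "real n / real k \<le> real (card G)"
    and "\<And>i. i \<in> G \<Longrightarrow> dist (loc i) p \<le> r"
  shows "\<exists>i\<in>G. infdist (loc i) W \<le> 2 * r"
proof (rule UPRF_group_near_outcome[OF assms(1-3)])
  fix i i' assume "i \<in> G" "i' \<in> G"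
  then show "dist (loc i) (loc i') \<le> 2 * r"
    using assms(4)[of i] assms(4)[of i'] dist_triangle3[of "loc i" "loc i'" p]
    by (simp add: dist_commute)
qed

lemma UPRF_prop_fair:
  assumes uprf: "UPRF n k loc W"
  shows "prop_fair n k loc C ((3 + sqrt 17) / 2) W"
  unfolding prop_fair_def
proof
  define \<alpha> :: real where "\<alpha> = (3 + sqrt 17) / 2"
  have \<alpha>_pos: "0 < \<alpha>" and \<alpha>_sq: "\<alpha> * \<alpha> = 3 * \<alpha> + 2"
    by (auto simp: \<alpha>_def field_simps add_pos_nonneg)
  assume "\<exists>N' c. N' \<subseteq> agents n \<and> c \<in> C - W \<and> real (card N') \<ge> real n / real k \<and>
    (\<forall>i\<in>N'. (3 + sqrt 17) / 2 * dist (loc i) c < infdist (loc i) W)"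
  then obtain N' c where N': "N' \<subseteq> agents n" "real n / real k \<le> real (card N')"
    and deviate: "\<And>i. i \<in> N' \<Longrightarrow> \<alpha> * dist (loc i) c < infdist (loc i) W"
    unfolding \<alpha>_def by blast
  have "finite N'"
    by (rule finite_subset[OF N'(1) finite_agents])
  define r where "r = Max ((\<lambda>i. dist (loc i) c) ` N')"
  have r_ge: "dist (loc i) c \<le> r" if "i \<in> N'" for i
    unfolding r_def using \<open>finite N'\<close> that by simp
  obtain i where i: "i \<in> N'" "infdist (loc i) W \<le> 2 * r"
    using UPRF_ball_near_outcome[OF uprf N' r_ge] by blast
  then have "r \<in> (\<lambda>i. dist (loc i) c) ` N'"
    unfolding r_def using \<open>finite N'\<close> by (intro Max_in) auto
  then obtain i' where i': "i' \<in> N'" "dist (loc i') c = r"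
    by auto
  have near: "\<alpha> * dist (loc i) c < 2 * r"
    using deviate[OF i(1)] i(2) by linarith
  have "\<alpha> * r < infdist (loc i') W"
    using deviate[OF i'(1)] i'(2) by simp
  also have "\<dots> \<le> infdist (loc i) W + dist (loc i') (loc i)"
    by (rule infdist_triangle)
  also have "\<dots> \<le> 2 * r + (r + dist (loc i) c)"
    using i(2) i'(2) dist_triangle[of "loc i'" "loc i" c] by (simp add: dist_commute)
  finally have far: "\<alpha> * r < 3 * r + dist (loc i) c"
    by simp
  have "(\<alpha> * \<alpha>) * r < 3 * \<alpha> * r + \<alpha> * dist (loc i) c"
    using mult_strict_left_mono[OF far \<alpha>_pos] by (simp add: algebra_simps)
  also have "\<dots> < (3 * \<alpha> + 2) * r"
    using near by (simp add: algebra_simps)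
  finally show False
    using \<alpha>_sq by simp
qed

lemma UPRF_ind_fair:
  assumes uprf: "UPRF n k loc W"
  shows "ind_fair n k loc 3 W"
  unfolding ind_fair_def
proof
  fix i assume "i \<in> agents n"
  define S where "S = {r. real n / real k \<le> real (card {j \<in> agents n. dist (loc i) (loc j) \<le> r})}"
  have three_r: "infdist (loc i) W / 3 \<le> r" if "r \<in> S" for r
  proof -
    let ?G = "{j \<in> agents n. dist (loc i) (loc j) \<le> r}"
    have "real n / real k \<le> real (card ?G)"
      using \<open>r \<in> S\<close> by (simp add: S_def)
    moreover have "dist (loc j) (loc i) \<le> r" if "j \<in> ?G" for j
      using that by (simp add: dist_commute)
    ultimately obtain j where j: "j \<in> ?G" "infdist (loc j) W \<le> 2 * r"
      using UPRF_ball_near_outcome[OF uprf, of ?G] by blast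
    have "infdist (loc i) W \<le> infdist (loc j) W + dist (loc i) (loc j)"
      by (rule infdist_triangle)
    with j show ?thesis by simp
  qed
  define R where "R = Max ((\<lambda>j. dist (loc i) (loc j)) ` agents n)"
  have "dist (loc i) (loc j) \<le> R" if "j \<in> agents n" for j
    unfolding R_def using that by simp
  then have "{j \<in> agents n. dist (loc i) (loc j) \<le> R} = agents n"
    by blast
  moreover have "real n / real k \<le> real n"
    by (cases "k = 0") (auto simp: divide_le_eq mult_le_cancel_left1)
  ultimately have "R \<in> S"
    by (simp add: S_def agents_def)
  then have "infdist (loc i) W / 3 \<le> Inf S"
    using three_r by (intro cInf_greatest) auto
  then show "infdist (loc i) W \<le> 3 * ind_radius n k loc i"
    by (simp add: ind_radius_def S_def)
qed

lemma UPRF_transferable_core: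
  assumes uprf: "UPRF n k loc W" and "1 < \<gamma>"
  shows "transferable_core n k loc C \<gamma> (3 * \<gamma> / (\<gamma> - 1)) W"
  unfolding transferable_core_def
proof
  assume "\<exists>N' c. N' \<subseteq> agents n \<and> c \<in> C - W \<and> real (card N') \<ge> \<gamma> * real n / real k \<and>
    3 * \<gamma> / (\<gamma> - 1) * (\<Sum>i\<in>N'. dist (loc i) c) < (\<Sum>i\<in>N'. infdist (loc i) W)"
  then obtain N' c where N': "N' \<subseteq> agents n" "\<gamma> * real n / real k \<le> real (card N')"
    and deviate: "3 * \<gamma> / (\<gamma> - 1) * (\<Sum>i\<in>N'. dist (loc i) c) < (\<Sum>i\<in>N'. infdist (loc i) W)"
    by blast
  have layers: "real (card {i\<in>N'. dist (loc i) c \<le> t \<and> 2 * t < infdist (loc i) W}) \<le> real n / real k"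
    for t
  proof (rule ccontr)
    let ?G = "{i\<in>N'. dist (loc i) c \<le> t \<and> 2 * t < infdist (loc i) W}"
    assume "\<not> real (card ?G) \<le> real n / real k"
    then have "real n / real k \<le> real (card ?G)"
      by simp
    moreover have "?G \<subseteq> agents n"
      using N'(1) by blast
    ultimately obtain i where "i \<in> ?G" "infdist (loc i) W \<le> 2 * t"
      using UPRF_ball_near_outcome[OF uprf, of ?G c t] by blast
    then show False
      by simp
  qed
  have "(\<Sum>i\<in>N'. infdist (loc i) W) \<le> 3 * \<gamma> / (\<gamma> - 1) * (\<Sum>i\<in>N'. dist (loc i) c)"
  proof (rule sum_le_of_layer_bound[OF _ _ _ _ infdist_nonneg layers \<open>1 < \<gamma>\<close>])
    show "finite N'"
      by (rule finite_subset[OF N'(1) finite_agents])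
    show "\<gamma> * (real n / real k) \<le> real (card N')"
      using N'(2) by simp
    show "infdist (loc i) W \<le> dist (loc i) c + infdist c W" for i
      using infdist_triangle[of "loc i" W c] by linarith
    show "infdist c W \<le> infdist (loc i) W + dist (loc i) c" for i
      using infdist_triangle[of c W "loc i"] dist_commute[of c "loc i"] by linarith
  qed (rule zero_le_dist)
  with deviate show False
    by linarith
qed

theorem theorem6:
  fixes n k :: nat and loc :: "nat \<Rightarrow> 'a::metric_space" and C W :: "'a set"
  assumes "n > 0" and "k > 0"
    and "W \<subseteq> C" and "finite W" and "card W \<le> k"
    and "UPRF n k loc W"
  shows "prop_fair n k loc C ((3 + sqrt 17) / 2) W
    \<and> (loc ` agents n \<subseteq> C \<longrightarrow> ind_fair n k loc 3 W)
    \<and> (\<forall>\<gamma>::real. \<gamma> > 1 \<longrightarrow> transferable_core n k loc C \<gamma> (3 * \<gamma> / (\<gamma> - 1)) W)"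
  using \<open>UPRF n k loc W\<close> by (simp add: UPRF_prop_fair UPRF_ind_fair UPRF_transferable_core)

end
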